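(* Let $p$ be an odd prime and $q\in\mathbb C_p$ with $|1-q|_p<p^{-1/(p-1)}$. For $h\in\mathbb Z$, $n\in\mathbb Z_+$ and $r\in\mathbb N$, $$\int_{\mathbb Z_p}E_{n,q}^{(h,-r)}(x)\,d\mu_{-1}(x)=\frac{1}{2^r}\sum_{m=0}^r\frac{1}{[m]_q!}\sum_{k=0}^mq^{(h-r)m}S_1(m-1,k;q)(-1)^k[r]_q^{m-k}E_{n,q}(m)$$ $$=\frac{1}{2^r}\sum_{m=0}^r\frac{1}{[m]_q!}\sum_{k=0}^mq^{(h-r)m}S_1(m-1,k;q)(-1)^k[r]_q^{m-k}\cdot\frac{1}{(1-q)^n}\sum_{j=0}^n\sum_{l=0}^j\binom nj\binom jl(-1)^{j+l}(1-q)^lq^{mj}E_{l,q}.$$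
   Context: For $x\in\mathbb Z_p$, $[x]_q=\frac{1-q^x}{1-q}$; $[m]_q!=[m]_q\cdots[1]_q$, $[0]_q!=1$. The fermionic $p$-adic integral is $\int_{\mathbb Z_p}f(x)\,d\mu_{-1}(x)=\lim_{N\to\infty}\sum_{x=0}^{p^N-1}f(x)(-1)^x$. $E_{n,q}=\int_{\mathbb Z_p}[y]_q^n\,d\mu_{-1}(y)$ and $E_{n,q}(x)=\int_{\mathbb Z_p}[x+y]_q^n\,d\mu_{-1}(y)$ are the $q$-Euler numbers and polynomials. The extended higher-order Nörlund type $q$-Euler polynomials are $E_{n,q}^{(h,-r)}(x)=\frac{1}{(1-q)^n}\sum_{l=0}^n\binom nl(-1)^l\frac{q^{lx}}{\int_{\mathbb Z_p}\cdots\int_{\mathbb Z_p}q^{l(x_1+\cdots+x_r)}q^{\sum_{j=1}^r(h-j)x_j}\,d\mu_{-1}(x_1)\cdots d\mu_{-1}(x_r)}$. The $q$-Stirling numbers of the first kind are defined by $\prod_{k=1}^N(1+[k]_qz)=\sum_{k\ge0}S_1(N,k;q)z^k$ for $N\ge-1$ (empty product $=1$; $S_1(N,k;q)=0$ for $k>N$; $S_1(-1,0;q)=1$). *)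

theory Defs
  imports "HOL-Computational_Algebra.Computational_Algebra"
begin

text \<open>An abstract model of the field C_p: a field 'a with an absolute value av
  that is non-archimedean, complete, algebraically closed and restricts to
  the p-adic absolute value on the integers.\<close>

definition av_tends :: "('a::field \<Rightarrow> real) \<Rightarrow> (nat \<Rightarrow> 'a) \<Rightarrow> 'a \<Rightarrow> bool" where
  "av_tends av s L \<longleftrightarrow> (\<lambda>n. av (s n - L)) \<longlonglongrightarrow> 0"

definition Cp_field :: "nat \<Rightarrow> ('a::field \<Rightarrow> real) \<Rightarrow> bool" where
  "Cp_field p av \<longleftrightarrow>
     (\<forall>x. av x \<ge> 0) \<and> (\<forall>x. av x = 0 \<longleftrightarrow> x = 0) \<and>
     (\<forall>x y. av (x * y) = av x * av y) \<and>
     (\<forall>x y. av (x + y) \<le> max (av x) (av y)) \<and>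
     (\<forall>n::int. n \<noteq> 0 \<longrightarrow> av (of_int n) = real p powr (- real (multiplicity (int p) n))) \<and>
     (\<forall>s::nat \<Rightarrow> 'a. (\<forall>e>0. \<exists>N. \<forall>m\<ge>N. \<forall>n\<ge>N. av (s m - s n) < e)
          \<longrightarrow> (\<exists>L. av_tends av s L)) \<and>
     (\<forall>P::'a poly. degree P > 0 \<longrightarrow> (\<exists>x. poly P x = 0))"

text \<open>Fermionic p-adic integral: limit of sum over x = 0..p^N-1 of f(x)(-1)^x.
  Only the values of f at non-negative integers enter.\<close>
definition fint :: "nat \<Rightarrow> ('a::field \<Rightarrow> real) \<Rightarrow> (nat \<Rightarrow> 'a) \<Rightarrow> 'a" where
  "fint p av f = (THE L. av_tends av (\<lambda>N. \<Sum>x<p ^ N. f x * (-1) ^ x) L)"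

text \<open>r-fold iterated fermionic integral over variables x_1..x_r (entries 1..r of xs).\<close>
fun mfint :: "nat \<Rightarrow> ('a::field \<Rightarrow> real) \<Rightarrow> nat \<Rightarrow> ((nat \<Rightarrow> nat) \<Rightarrow> 'a) \<Rightarrow> 'a" where
  "mfint p av 0 F = F (\<lambda>_. 0)"
| "mfint p av (Suc k) F = fint p av (\<lambda>y. mfint p av k (\<lambda>xs. F (xs(Suc k := y))))"

definition qint :: "'a::field \<Rightarrow> nat \<Rightarrow> 'a" where
  "qint q x = (1 - q ^ x) / (1 - q)"

definition qfact :: "'a::field \<Rightarrow> nat \<Rightarrow> 'a" where
  "qfact q m = (\<Prod>k=1..m. qint q k)"

text \<open>q-Stirling numbers of the first kind, N \<ge> -1 (N = -1 gives the empty product).\<close>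
definition qS1 :: "'a::field \<Rightarrow> int \<Rightarrow> nat \<Rightarrow> 'a" where
  "qS1 q N k = coeff (\<Prod>i\<in>{1..nat N}. [:1, qint q i:]) k"

definition qEuler :: "nat \<Rightarrow> ('a::field \<Rightarrow> real) \<Rightarrow> 'a \<Rightarrow> nat \<Rightarrow> 'a" where
  "qEuler p av q n = fint p av (\<lambda>y. qint q y ^ n)"

definition qEuler_poly :: "nat \<Rightarrow> ('a::field \<Rightarrow> real) \<Rightarrow> 'a \<Rightarrow> nat \<Rightarrow> nat \<Rightarrow> 'a" where
  "qEuler_poly p av q n x = fint p av (\<lambda>y. qint q (x + y) ^ n)"

text \<open>Extended higher-order Noerlund type q-Euler polynomials E_{n,q}^{(h,-r)}(x),
  evaluated at non-negative integers x.\<close>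
definition qEuler_NH :: "nat \<Rightarrow> ('a::field \<Rightarrow> real) \<Rightarrow> 'a \<Rightarrow> nat \<Rightarrow> int \<Rightarrow> nat \<Rightarrow> nat \<Rightarrow> 'a" where
  "qEuler_NH p av q n h r x =
     1 / (1 - q) ^ n * (\<Sum>l=0..n. of_nat (n choose l) * (-1) ^ l * q ^ (l * x) /
        mfint p av r (\<lambda>xs. q ^ (l * (\<Sum>j=1..r. xs j)) *
                           q powi (\<Sum>j=1..r. (h - int j) * int (xs j))))"

end

theory Submission
  imports Defs
begin

text \<open>Expanding [x+y]_q^n binomially turns every integrand into a linear combination of
  geometric sequences w^y. If |w - 1| is below the critical radius p^(-1/(p-1)), then
  |w^p - 1| = |w - 1|/p, so w^(p^N) tends to 1 and the fermionic integral of w^y is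
  2/(1 + w), the limit of the alternating partial sums (1 + w^(p^N))/(1 + w). Hence the
  r-fold integral in the denominator of E^(h,-r) is the product of the 2/(1 + q^(l+h-j)).
  Rothe's q-binomial theorem, with the q-Stirling numbers producing the q-falling factorials
  [r]_q [r-1]_q ... as alternating sums, expands the product of the 1 + t q^(h-j) in powers
  of t; putting t = q^l and resumming over l gives the first identity. The second is the
  binomial expansion of [m+y]_q in powers of [y]_q.\<close>

section \<open>Non-archimedean absolute values\<close>

locale nonarch_absval =
  fixes av :: "'a::field \<Rightarrow> real"
  assumes av_nonneg: "0 \<le> av x"
    and av_eq_0_iff: "av x = 0 \<longleftrightarrow> x = 0"
    and av_mult: "av (x * y) = av x * av y"
    and av_add_le_max: "av (x + y) \<le> max (av x) (av y)"
begin

lemma av_0 [simp]: "av 0 = 0"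
  by (simp add: av_eq_0_iff)

lemma av_1 [simp]: "av 1 = 1"
proof -
  have "av 1 = av 1 * av 1" using av_mult[of 1 1] by simp
  moreover have "av 1 \<noteq> 0" by (simp add: av_eq_0_iff)
  ultimately show ?thesis by simp
qed

lemma av_uminus [simp]: "av (- x) = av x"
proof -
  have "av (-1) ^ 2 = 1" using av_mult[of "-1" "-1"] by (simp add: power2_eq_square)
  hence "av (-1) = 1" using av_nonneg[of "-1"] by (simp add: power2_eq_1_iff)
  thus ?thesis using av_mult[of "-1" x] by simp
qed

lemma av_minus_commute: "av (x - y) = av (y - x)"
  using av_uminus[of "x - y"] by simp

lemma av_power: "av (x ^ n) = av x ^ n"
  by (induction n) (simp_all add: av_mult)

lemma av_divide: "av (x / y) = av x / av y"
proof (cases "y = 0")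
  case False
  have "av (x / y) * av y = av x" using False by (simp flip: av_mult)
  thus ?thesis using False by (simp add: av_eq_0_iff field_simps)
qed simp

lemma av_diff_le_max: "av (x - y) \<le> max (av x) (av y)"
  using av_add_le_max[of x "- y"] by simp

lemma av_add_le: "av (x + y) \<le> av x + av y"
  using av_add_le_max[of x y] av_nonneg[of x] av_nonneg[of y] by linarith

lemma av_add_eq_of_less: "av x < av y \<Longrightarrow> av (x + y) = av y"
  using av_add_le_max[of x y] av_diff_le_max[of "x + y" x] by auto

lemma av_sum_le:
  "finite I \<Longrightarrow> (\<And>i. i \<in> I \<Longrightarrow> av (f i) \<le> B) \<Longrightarrow> 0 \<le> B \<Longrightarrow> av (sum f I) \<le> B"
  by (induction I rule: finite_induct) (auto intro: order_trans[OF av_add_le_max])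

lemma av_sum_less:
  "finite I \<Longrightarrow> (\<And>i. i \<in> I \<Longrightarrow> av (f i) < B) \<Longrightarrow> 0 < B \<Longrightarrow> av (sum f I) < B"
  by (induction I rule: finite_induct) (auto intro: le_less_trans[OF av_add_le_max])

lemma av_tends_unique: "av_tends av s L \<Longrightarrow> av_tends av s M \<Longrightarrow> L = M"
proof -
  assume "av_tends av s L" "av_tends av s M"
  hence lim: "(\<lambda>n. av (s n - L) + av (s n - M)) \<longlonglongrightarrow> 0 + 0"
    unfolding av_tends_def by (intro tendsto_add)
  have "av (L - M) \<le> av (s n - L) + av (s n - M)" for n
    using av_add_le[of "L - s n" "s n - M"] av_minus_commute[of "s n" L] by simp
  hence "av (L - M) \<le> 0" using LIMSEQ_le_const[OF lim] by auto
  thus ?thesis using av_nonneg[of "L - M"] by (simp add: av_eq_0_iff)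
qed

lemma av_tends_add:
  assumes "av_tends av s L" "av_tends av t M"
  shows "av_tends av (\<lambda>n. s n + t n) (L + M)"
proof -
  have lim: "(\<lambda>n. av (s n - L) + av (t n - M)) \<longlonglongrightarrow> 0"
    using assms tendsto_add[of "\<lambda>n. av (s n - L)" 0 _ "\<lambda>n. av (t n - M)" 0]
    unfolding av_tends_def by simp
  have le: "av ((s n + t n) - (L + M)) \<le> av (s n - L) + av (t n - M)" for n
    using av_add_le[of "s n - L" "t n - M"] by (simp add: algebra_simps)
  show ?thesis unfolding av_tends_def
    by (rule tendsto_sandwich[of "\<lambda>_. 0" _ _ "\<lambda>n. av (s n - L) + av (t n - M)"])
      (use le lim av_nonneg in auto)
qed

lemma av_tends_cmult: "av_tends av s L \<Longrightarrow> av_tends av (\<lambda>n. c * s n) (c * L)"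
  unfolding av_tends_def
  using tendsto_mult_left[of "\<lambda>n. av (s n - L)" 0 sequentially "av c"]
  by (simp add: av_mult flip: right_diff_distrib)

end

section \<open>Elements near one in a model of C_p\<close>

locale padic_field =
  fixes p :: nat and av :: "'a::field \<Rightarrow> real"
  assumes prime_p: "prime p" and odd_p: "odd p" and Cp_field: "Cp_field p av"

sublocale padic_field \<subseteq> nonarch_absval av
  using Cp_field unfolding Cp_field_def by unfold_locales blast+

context padic_field
begin

lemma p_gt_1: "1 < p"
  using prime_p prime_gt_1_nat by blast

lemma av_of_nat:
  "k \<noteq> 0 \<Longrightarrow> av (of_nat k) = real p powr (- real (multiplicity (int p) (int k)))"
  using Cp_field unfolding Cp_field_def by (metis of_int_of_nat_eq of_nat_0_eq_iff)

lemma av_of_nat_le_1: "av (of_nat k) \<le> 1"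
  using av_of_nat[of k] p_gt_1 by (cases "k = 0") (simp_all add: powr_minus_divide ge_one_powr_ge_zero)

lemma av_of_nat_coprime: "\<not> p dvd k \<Longrightarrow> av (of_nat k) = 1"
  using av_of_nat[of k] p_gt_1 by (cases "k = 0") (auto simp: not_dvd_imp_multiplicity_0)

lemma av_of_nat_p: "av (of_nat p) = 1 / real p"
  using av_of_nat[of p] p_gt_1 prime_p
  by (simp add: multiplicity_self prime_nat_iff_prime powr_minus_divide)

lemma av_binomial_prime_le: "0 < i \<Longrightarrow> i < p \<Longrightarrow> av (of_nat (p choose i)) \<le> 1 / real p"
proof -
  assume "0 < i" "i < p"
  then obtain c where "p choose i = p * c"
    using dvd_choose_prime[of i p] prime_p by auto
  thus ?thesis
    using av_of_nat_p av_of_nat_le_1[of c] p_gt_1 by (simp add: av_mult divide_right_mono)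
qed

lemma av_2: "av 2 = 1"
proof -
  have "\<not> p dvd 2" using dvd_imp_le[of p 2] odd_p p_gt_1 by (cases "p = 2") auto
  thus ?thesis using av_of_nat_coprime[of 2] by simp
qed

definition crit_radius :: real where
  "crit_radius = real p powr (- 1 / (real p - 1))"

lemma crit_radius_pos: "0 < crit_radius"
  unfolding crit_radius_def using p_gt_1 by simp

lemma crit_radius_less_1: "crit_radius < 1"
  unfolding crit_radius_def using p_gt_1 by (simp add: powr_less_one)

lemma crit_radius_power: "crit_radius ^ (p - 1) = 1 / real p"
proof -
  have "crit_radius ^ (p - 1) = crit_radius powr real (p - 1)"
    using crit_radius_pos by (simp add: powr_realpow)
  also have "\<dots> = real p powr (- 1 / (real p - 1) * real (p - 1))"
    unfolding crit_radius_def by (simp add: powr_powr)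
  also have "- 1 / (real p - 1) * real (p - 1) = -1"
    using p_gt_1 by (simp add: of_nat_diff)
  finally show ?thesis using p_gt_1 by (simp add: powr_minus_divide)
qed

lemma power_p_minus_1_expand:
  fixes u :: 'a
  shows "(1 + u) ^ p - 1 = of_nat p * u + (\<Sum>k=2..p. of_nat (p choose k) * u ^ k)"
proof -
  have "{..p} = insert 0 (insert 1 {2..p})" using p_gt_1 by auto
  thus ?thesis using binomial_ring[of u 1 p] by (simp add: add.commute add.left_commute)
qed

text \<open>Below the critical radius the linear term of the binomial expansion dominates.\<close>
lemma av_power_p_minus_1:
  assumes small: "av u < crit_radius"
  shows "av ((1 + u) ^ p - 1) = av u / real p"
proof (cases "u = 0")
  case False
  hence u_pos: "0 < av u" using av_nonneg[of u] av_eq_0_iff[of u] by linarith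
  have "av (of_nat (p choose k) * u ^ k) < av u / real p" if k: "k \<in> {2..p}" for k
  proof (cases "k = p")
    case True
    have "av u ^ (p - 1) < 1 / real p"
      using crit_radius_power power_strict_mono[OF small av_nonneg, of "p - 1"] p_gt_1 by simp
    hence "av u * av u ^ (p - 1) < av u / real p"
      using mult_strict_left_mono[OF _ u_pos] by fastforce
    moreover have "av u * av u ^ (p - 1) = av u ^ p"
      using p_gt_1 by (simp flip: power_Suc)
    ultimately show ?thesis using True by (simp add: av_mult av_power)
  next
    case False
    have "av (of_nat (p choose k)) * av u ^ k \<le> 1 / real p * av u ^ k"
      using av_binomial_prime_le[of k] False k by (intro mult_right_mono) (auto simp: av_nonneg)
    hence "av (of_nat (p choose k) * u ^ k) \<le> 1 / real p * av u ^ k"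
      by (simp add: av_mult av_power)
    also have "av u ^ k < av u"
      using k u_pos small crit_radius_less_1 by (intro power_strict_decreasing[of 1 k, simplified]) auto
    hence "1 / real p * av u ^ k < av u / real p" using p_gt_1 by (simp add: divide_strict_right_mono)
    finally show ?thesis .
  qed
  hence "av (\<Sum>k=2..p. of_nat (p choose k) * u ^ k) < av u / real p"
    using u_pos p_gt_1 by (intro av_sum_less) auto
  hence "av ((\<Sum>k=2..p. of_nat (p choose k) * u ^ k) + of_nat p * u) = av u / real p"
    using av_add_eq_of_less av_of_nat_p by (simp add: av_mult)
  thus ?thesis by (simp add: power_p_minus_1_expand add.commute)
qed simp

definition near_one :: "'a \<Rightarrow> bool" where
  "near_one w \<longleftrightarrow> av (w - 1) < crit_radius"

lemma near_one_av: "near_one w \<Longrightarrow> av w = 1"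
  using av_add_eq_of_less[of "w - 1" 1] crit_radius_less_1 unfolding near_one_def by simp

lemma near_one_av_1_plus: "near_one w \<Longrightarrow> av (1 + w) = 1"
  using av_add_eq_of_less[of "w - 1" 2] crit_radius_less_1 av_2 unfolding near_one_def
  by (simp add: add.commute)

lemma near_one_power_p_power:
  "near_one w \<Longrightarrow> av (w ^ (p ^ N) - 1) = av (w - 1) / real p ^ N"
proof (induction N)
  case (Suc N)
  have "av (w - 1) / real p ^ N \<le> av (w - 1)"
    using p_gt_1 av_nonneg[of "w - 1"] by (simp add: divide_le_eq mult_le_cancel_left1)
  hence "av (w ^ (p ^ N) - 1) < crit_radius"
    using Suc unfolding near_one_def by simp
  hence "av ((w ^ (p ^ N)) ^ p - 1) = av (w ^ (p ^ N) - 1) / real p"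
    using av_power_p_minus_1[of "w ^ (p ^ N) - 1"] by simp
  moreover have "w ^ (p ^ Suc N) = (w ^ (p ^ N)) ^ p"
    by (simp only: power_Suc2 power_mult)
  ultimately show ?case using Suc by simp
qed simp

lemma near_one_power_p_power_tendsto:
  assumes "near_one w"
  shows "(\<lambda>N. av (w ^ (p ^ N) - 1)) \<longlonglongrightarrow> 0"
proof -
  have "(\<lambda>N. av (w - 1) * inverse (real p ^ N)) \<longlonglongrightarrow> av (w - 1) * 0"
    using LIMSEQ_inverse_realpow_zero[of "real p"] p_gt_1 by (intro tendsto_mult) auto
  thus ?thesis using near_one_power_p_power[OF assms] by (simp add: divide_inverse)
qed

lemma near_one_power_minus_1_le:
  assumes "near_one w"
  shows "av (w ^ n - 1) \<le> av (w - 1)"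
proof -
  have "av (\<Sum>i<n. w ^ i) \<le> 1"
    using near_one_av[OF assms] by (intro av_sum_le) (simp_all add: av_power)
  thus ?thesis
    by (simp add: power_diff_1_eq av_mult mult_left_le av_nonneg)
qed

lemma near_one_powi_minus_1_le:
  assumes w: "near_one w"
  shows "av (w powi a - 1) \<le> av (w - 1)"
proof (cases "a \<ge> 0")
  case True
  thus ?thesis using near_one_power_minus_1_le[OF w] by (simp add: power_int_def)
next
  case False
  let ?v = "w ^ nat (- a)"
  have "av ?v = 1" using near_one_av[OF w] by (simp add: av_power)
  moreover have "?v \<noteq> 0"
    using calculation by (metis av_0 zero_neq_one)
  hence "inverse ?v - 1 = (1 - ?v) / ?v"
    by (simp add: field_simps)
  ultimately have "av (inverse ?v - 1) = av (?v - 1)"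
    using av_divide[of "1 - ?v" ?v] av_minus_commute[of ?v 1] by simp
  thus ?thesis using False near_one_power_minus_1_le[OF w]
    by (simp add: power_int_def power_inverse)
qed

lemma near_one_powi: "near_one w \<Longrightarrow> near_one (w powi a)"
  using near_one_powi_minus_1_le unfolding near_one_def by (meson le_less_trans)

lemma near_one_power: "near_one w \<Longrightarrow> near_one (w ^ n)"
  using near_one_powi[of w "int n"] by simp

text \<open>Near one, 1 is the only root of unity: for k coprime to p the ultrametric inequality
  gives |1 + w + ... + w^(k-1)| = |k| = 1, and a k divisible by p reduces to the root w^p,
  which is still near one and differs from 1 because |w^p - 1| = |w - 1|/p.\<close>
lemma near_one_power_eq_1_iff:
  assumes "near_one w" "0 < k"
  shows "w ^ k = 1 \<longleftrightarrow> w = 1"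
proof
  show "w ^ k = 1 \<Longrightarrow> w = 1" using assms
  proof (induction k arbitrary: w rule: less_induct)
    case (less k)
    show ?case
    proof (cases "p dvd k")
      case False
      have "av (w - 1) < 1"
        using less.prems(2) crit_radius_less_1 unfolding near_one_def by simp
      hence "av (\<Sum>i<k. w ^ i - 1) < 1"
        using near_one_power_minus_1_le[OF less.prems(2)]
        by (intro av_sum_less) (auto intro: le_less_trans)
      hence "av ((\<Sum>i<k. w ^ i - 1) + of_nat k) = 1"
        using av_add_eq_of_less av_of_nat_coprime[OF False] by simp
      hence "(\<Sum>i<k. w ^ i) \<noteq> 0" by (auto simp: sum_subtractf)
      thus "w = 1" using power_diff_1_eq[of w k] less.prems(1) by simp
    next
      case True
      then obtain k' where k': "k = p * k'" by blast
      with less.prems(3) p_gt_1 have "0 < k'" "k' < k" by auto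
      hence "w ^ p = 1"
        using less.IH[of k' "w ^ p"] less.prems near_one_power k' by (simp add: power_mult)
      hence "av (w - 1) = 0"
        using near_one_power_p_power[OF less.prems(2), of 1] p_gt_1 by simp
      thus "w = 1" by (simp add: av_eq_0_iff)
    qed
  qed
qed simp

lemma qint_ne_0: "near_one q \<Longrightarrow> q \<noteq> 1 \<Longrightarrow> 0 < k \<Longrightarrow> qint q k \<noteq> 0"
  unfolding qint_def using near_one_power_eq_1_iff by simp

lemma qfact_ne_0: "near_one q \<Longrightarrow> q \<noteq> 1 \<Longrightarrow> qfact q m \<noteq> 0"
  unfolding qfact_def using qint_ne_0 by simp

subsection \<open>The fermionic integral\<close>

definition has_fint :: "(nat \<Rightarrow> 'a) \<Rightarrow> 'a \<Rightarrow> bool" where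
  "has_fint f L \<longleftrightarrow> av_tends av (\<lambda>N. \<Sum>x<p ^ N. f x * (-1) ^ x) L"

lemma fint_eqI: "has_fint f L \<Longrightarrow> fint p av f = L"
  unfolding fint_def has_fint_def using av_tends_unique by blast

lemma has_fint_add: "has_fint f L \<Longrightarrow> has_fint g M \<Longrightarrow> has_fint (\<lambda>x. f x + g x) (L + M)"
  unfolding has_fint_def using av_tends_add by (simp add: distrib_right sum.distrib)

lemma has_fint_cmult: "has_fint f L \<Longrightarrow> has_fint (\<lambda>x. c * f x) (c * L)"
  unfolding has_fint_def mult.assoc sum_distrib_left[symmetric] by (rule av_tends_cmult)

lemma has_fint_sum:
  "finite I \<Longrightarrow> (\<And>i. i \<in> I \<Longrightarrow> has_fint (f i) (L i))
    \<Longrightarrow> has_fint (\<lambda>x. \<Sum>i\<in>I. f i x) (\<Sum>i\<in>I. L i)"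
proof (induction I rule: finite_induct)
  case empty
  show ?case unfolding has_fint_def av_tends_def by simp
next
  case (insert a F)
  thus ?case using has_fint_add[of "f a" "L a"] by simp
qed

text \<open>The partial sums up to p^N are (1 + w^(p^N)) / (1 + w), because p is odd.\<close>
lemma has_fint_geometric:
  assumes w: "near_one w"
  shows "has_fint (\<lambda>x. w ^ x) (2 / (1 + w))"
proof -
  have av_denom: "av (1 + w) = 1" by (rule near_one_av_1_plus[OF w])
  hence "-w \<noteq> 1" by (metis av_0 zero_neq_one add.commute diff_minus_eq_add diff_self minus_minus)
  have partial_sum: "(\<Sum>x<p ^ N. w ^ x * (-1) ^ x) = (1 + w ^ (p ^ N)) / (1 + w)" for N
  proof -
    have "(\<Sum>x<p ^ N. w ^ x * (-1) ^ x) = (\<Sum>x<p ^ N. (-w) ^ x)"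
      by (simp add: power_minus' mult.commute)
    also have "\<dots> = (1 - (-w) ^ (p ^ N)) / (1 - (-w))"
      using \<open>-w \<noteq> 1\<close> by (simp add: sum_gp_strict)
    also have "(-w) ^ (p ^ N) = - (w ^ (p ^ N))"
      using odd_p by (simp add: power_minus')
    finally show ?thesis by simp
  qed
  have "(1 + w ^ (p ^ N)) / (1 + w) - 2 / (1 + w) = (w ^ (p ^ N) - 1) / (1 + w)" for N
    by (simp add: diff_divide_distrib[symmetric])
  hence "av ((\<Sum>x<p ^ N. w ^ x * (-1) ^ x) - 2 / (1 + w)) = av (w ^ (p ^ N) - 1)" for N
    by (simp add: partial_sum av_divide av_denom)
  thus ?thesis
    unfolding has_fint_def av_tends_def using near_one_power_p_power_tendsto[OF w] by simp
qed

lemma has_fint_geometric_sum: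
  "finite I \<Longrightarrow> (\<And>i. i \<in> I \<Longrightarrow> near_one (w i))
    \<Longrightarrow> has_fint (\<lambda>x. \<Sum>i\<in>I. c i * w i ^ x) (\<Sum>i\<in>I. c i * (2 / (1 + w i)))"
  by (intro has_fint_sum has_fint_cmult has_fint_geometric)

lemma mfint_geometric_prod:
  assumes w: "\<And>j. near_one (w j)"
  shows "(\<And>xs xs'. (\<And>j. k < j \<Longrightarrow> xs j = xs' j) \<Longrightarrow> G xs = G xs') \<Longrightarrow>
     mfint p av k (\<lambda>xs. G xs * (\<Prod>j=1..k. w j ^ xs j)) = G (\<lambda>_. 0) * (\<Prod>j=1..k. 2 / (1 + w j))"
proof (induction k arbitrary: G)
  case 0 show ?case by simp
next
  case (Suc k)
  define C where "C = (\<Prod>j=1..k. 2 / (1 + w j))"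
  have inner: "mfint p av k (\<lambda>xs. G (xs(Suc k := y)) * (\<Prod>j=1..Suc k. w j ^ (xs(Suc k := y)) j))
        = (G (\<lambda>_. 0) * C) * w (Suc k) ^ y" for y
  proof -
    have e: "(\<lambda>xs. G (xs(Suc k := y)) * (\<Prod>j=1..Suc k. w j ^ (xs(Suc k := y)) j))
       = (\<lambda>xs. (G (xs(Suc k := y)) * w (Suc k) ^ y) * (\<Prod>j=1..k. w j ^ xs j))"
    proof
      fix xs
      have "(\<Prod>j=1..k. w j ^ (xs(Suc k := y)) j) = (\<Prod>j=1..k. w j ^ xs j)"
        by (intro prod.cong) auto
      thus "G (xs(Suc k := y)) * (\<Prod>j=1..Suc k. w j ^ (xs(Suc k := y)) j)
          = (G (xs(Suc k := y)) * w (Suc k) ^ y) * (\<Prod>j=1..k. w j ^ xs j)"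
        by (simp add: prod.cl_ivl_Suc ac_simps)
    qed
    have dep: "G (xs(Suc k := y)) * w (Suc k) ^ y = G (xs'(Suc k := y)) * w (Suc k) ^ y"
      if "\<And>j. k < j \<Longrightarrow> xs j = xs' j" for xs xs'
    proof -
      have "G (xs(Suc k := y)) = G (xs'(Suc k := y))" by (rule Suc.prems) (use that in auto)
      thus ?thesis by simp
    qed
    have "mfint p av k (\<lambda>xs. (G (xs(Suc k := y)) * w (Suc k) ^ y) * (\<Prod>j=1..k. w j ^ xs j))
        = (G ((\<lambda>_. 0)(Suc k := y)) * w (Suc k) ^ y) * C"
      unfolding C_def by (rule Suc.IH[OF dep]) auto
    moreover have "G ((\<lambda>_. 0)(Suc k := y)) = G (\<lambda>_. 0)" by (rule Suc.prems) auto
    ultimately show ?thesis unfolding e by (simp add: ac_simps)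
  qed
  have "mfint p av (Suc k) (\<lambda>xs. G xs * (\<Prod>j=1..Suc k. w j ^ xs j))
      = fint p av (\<lambda>y. (G (\<lambda>_. 0) * C) * w (Suc k) ^ y)"
    by (simp only: mfint.simps inner)
  also have "\<dots> = (G (\<lambda>_. 0) * C) * (2 / (1 + w (Suc k)))"
    by (intro fint_eqI has_fint_cmult has_fint_geometric w)
  finally show ?case
    unfolding C_def by (simp add: prod.cl_ivl_Suc ac_simps)
qed

end

section \<open>q-Stirling numbers and the q-binomial theorem\<close>

lemma coeff_mult_linear:
  fixes P :: "'a::comm_ring_1 poly"
  shows "coeff (P * [:1, b:]) k = coeff P k + (if k = 0 then 0 else b * coeff P (k - 1))"
  by (simp add: mult.commute[of P] coeff_pCons')

lemma prod_linear_Suc: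
  "(\<Prod>i=1..Suc N. [:1, a i:]) = (\<Prod>i=1..N. [:1, a i:]) * [:1, a (Suc N):]"
  by (simp add: prod.cl_ivl_Suc)

lemma coeff_prod_linear_eq_0:
  fixes a :: "nat \<Rightarrow> 'a::comm_ring_1"
  shows "N < k \<Longrightarrow> coeff (\<Prod>i=1..N. [:1, a i:]) k = 0"
proof (induction N arbitrary: k)
  case (Suc N)
  show ?case unfolding prod_linear_Suc coeff_mult_linear using Suc by auto
qed simp

lemma reciprocal_sum_prod_linear_Suc:
  fixes a :: "nat \<Rightarrow> 'a::comm_ring_1"
  shows "(\<Sum>k\<le>Suc N. coeff (\<Prod>i=1..N. [:1, a i:]) k * (-1) ^ k * x ^ (Suc N - k))
       = x * (\<Sum>k\<le>N. coeff (\<Prod>i=1..N. [:1, a i:]) k * (-1) ^ k * x ^ (N - k))"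
  using coeff_prod_linear_eq_0[of N "Suc N" a]
  by (simp add: sum_distrib_left Suc_diff_le ac_simps)

lemma reciprocal_sum_prod_linear:
  fixes a :: "nat \<Rightarrow> 'a::comm_ring_1"
  shows "(\<Sum>k\<le>N. coeff (\<Prod>i=1..N. [:1, a i:]) k * (-1) ^ k * x ^ (N - k)) = (\<Prod>i=1..N. x - a i)"
proof (induction N)
  case (Suc N)
  define c where "c k = coeff (\<Prod>i=1..N. [:1, a i:]) k" for k
  define S where "S = (\<Sum>k\<le>N. c k * (-1) ^ k * x ^ (N - k))"
  have "(\<Sum>k\<le>Suc N. coeff (\<Prod>i=1..Suc N. [:1, a i:]) k * (-1) ^ k * x ^ (Suc N - k))
     = (\<Sum>k\<le>Suc N. c k * (-1) ^ k * x ^ (Suc N - k))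
       + (\<Sum>k\<le>Suc N. (if k = 0 then 0 else a (Suc N) * c (k - 1)) * (-1) ^ k * x ^ (Suc N - k))"
    unfolding prod_linear_Suc coeff_mult_linear c_def by (simp add: distrib_right sum.distrib)
  also have "(\<Sum>k\<le>Suc N. c k * (-1) ^ k * x ^ (Suc N - k)) = x * S"
    unfolding c_def S_def by (rule reciprocal_sum_prod_linear_Suc)
  also have "(\<Sum>k\<le>Suc N. (if k = 0 then 0 else a (Suc N) * c (k - 1)) * (-1) ^ k * x ^ (Suc N - k))
      = (\<Sum>k\<le>N. a (Suc N) * c k * (-1) ^ Suc k * x ^ (N - k))"
    by (subst sum.atMost_Suc_shift) simp
  also have "\<dots> = - (a (Suc N) * S)"
    unfolding S_def by (simp add: sum_distrib_left sum_negf[symmetric] mult.assoc)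
  finally show ?case
    using Suc unfolding S_def c_def by (simp add: prod.cl_ivl_Suc algebra_simps)
qed simp

definition qfalling :: "'a::field \<Rightarrow> nat \<Rightarrow> nat \<Rightarrow> 'a" where
  "qfalling q r m = (\<Prod>i<m. q ^ i * qint q (r - i))"

lemma qint_diff: "i \<le> r \<Longrightarrow> qint q r - qint q i = q ^ i * qint q (r - i)"
proof -
  assume "i \<le> r"
  then obtain d where d: "r = i + d" using le_Suc_ex by blast
  have "(1 - q ^ r) - (1 - q ^ i) = q ^ i * (1 - q ^ d)"
    unfolding d by (simp add: power_add algebra_simps)
  thus ?thesis unfolding qint_def d by (simp add: diff_divide_distrib[symmetric])
qed

lemma sum_qS1_eq_qfalling:
  fixes q :: "'a::field"
  assumes "m \<le> r"
  shows "(\<Sum>k=0..m. qS1 q (int m - 1) k * (-1) ^ k * qint q r ^ (m - k)) = qfalling q r m"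
proof (cases m)
  case (Suc N)
  have "nat (int (Suc N) - 1) = N" by simp
  hence "(\<Sum>k=0..m. qS1 q (int m - 1) k * (-1) ^ k * qint q r ^ (m - k))
      = (\<Sum>k\<le>Suc N. coeff (\<Prod>i=1..N. [:1, qint q i:]) k * (-1) ^ k * qint q r ^ (Suc N - k))"
    unfolding qS1_def Suc atLeast0AtMost by simp
  also have "\<dots> = qint q r * (\<Prod>i=1..N. qint q r - qint q i)"
    unfolding reciprocal_sum_prod_linear_Suc reciprocal_sum_prod_linear ..
  also have "(\<Prod>i=1..N. qint q r - qint q i) = (\<Prod>i=1..N. q ^ i * qint q (r - i))"
    using assms Suc by (intro prod.cong) (auto intro: qint_diff)
  also have "\<dots> = (\<Prod>i<N. q ^ Suc i * qint q (r - Suc i))"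
    by (simp add: prod.atLeast1_atMost_eq)
  finally show ?thesis
    unfolding qfalling_def Suc prod.lessThan_Suc_shift by simp
qed (simp add: qS1_def qfalling_def)

lemma qfalling_Suc_Suc: "qfalling q (Suc r) (Suc j) = qint q (Suc r) * q ^ j * qfalling q r j"
  unfolding qfalling_def prod.lessThan_Suc_shift by (simp add: prod.distrib ac_simps)

lemma qfalling_eq_0: "r < j \<Longrightarrow> qfalling q r j = 0"
  unfolding qfalling_def by (rule prod_zero) (auto intro!: bexI[of _ r] simp: qint_def)

lemma qfalling_Suc:
  "qfalling q (Suc r) (Suc j) = qfalling q r (Suc j) + q ^ r * qint q (Suc j) * qfalling q r j"
proof (cases "j \<le> r")
  case True
  then obtain d where d: "r = j + d" using le_Suc_ex by blast
  have "(1 - q ^ Suc (j + d)) * q ^ j = q ^ j * (1 - q ^ d) + q ^ (j + d) * (1 - q ^ Suc j)"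
    by (simp add: algebra_simps power_add)
  hence "qint q (Suc (j + d)) * q ^ j = q ^ j * qint q d + q ^ (j + d) * qint q (Suc j)"
    unfolding qint_def by (simp add: add_divide_distrib)
  moreover have "qfalling q r (Suc j) = qfalling q r j * (q ^ j * qint q d)"
    unfolding qfalling_def d by simp
  ultimately show ?thesis unfolding qfalling_Suc_Suc d by (simp add: algebra_simps)
next
  case False
  thus ?thesis using qfalling_eq_0[of r j q] qfalling_eq_0[of r "Suc j" q] by (simp add: qfalling_Suc_Suc)
qed

lemma coeff_qbinomial: "coeff (\<Prod>i<r. [:1, q ^ i:]) m * qfact q m = qfalling q r m"
proof (induction r arbitrary: m)
  case 0
  thus ?case using qfalling_eq_0[of 0 m q] by (cases m) (simp_all add: qfalling_def qfact_def)
next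
  case (Suc r)
  show ?case
  proof (cases m)
    case 0 thus ?thesis using Suc.IH[of 0] by (simp add: coeff_mult_linear qfalling_def qfact_def)
  next
    case (Suc j)
    have "qfact q (Suc j) = qfact q j * qint q (Suc j)"
      unfolding qfact_def by (simp add: prod.cl_ivl_Suc)
    thus ?thesis using Suc.IH[of "Suc j"] Suc.IH[of j]
      by (simp add: Suc coeff_mult_linear qfalling_Suc algebra_simps)
  qed
qed

lemma q_binomial:
  fixes q :: "'a::field"
  assumes "\<And>m. m \<le> r \<Longrightarrow> qfact q m \<noteq> 0"
  shows "(\<Prod>i<r. 1 + q ^ i * s) = (\<Sum>m\<le>r. qfalling q r m / qfact q m * s ^ m)"
proof -
  define Q where "Q = (\<Prod>i<r. [:1, q ^ i:])"
  have "degree Q \<le> sum (degree \<circ> (\<lambda>i. [:1, q ^ i:])) {..<r}"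
    unfolding Q_def by (rule degree_prod_sum_le) simp
  also have "\<dots> \<le> (\<Sum>i<r. 1)" by (rule sum_mono) simp
  finally have "poly Q s = poly (\<Sum>m\<le>r. monom (coeff Q m) m) s"
    by (simp add: poly_as_sum_of_monoms')
  hence "poly Q s = (\<Sum>m\<le>r. coeff Q m * s ^ m)"
    by (simp add: poly_sum poly_monom)
  moreover have "coeff Q m = qfalling q r m / qfact q m" if "m \<le> r" for m
    using coeff_qbinomial[where r=r and q=q and m=m] assms[OF that] unfolding Q_def by (simp add: eq_divide_eq)
  ultimately show ?thesis
    unfolding Q_def by (simp add: poly_prod mult.commute)
qed

lemma prod_atLeast1_atMost_rev:
  fixes f :: "nat \<Rightarrow> 'a::comm_monoid_mult"
  shows "(\<Prod>j=1..r. f j) = (\<Prod>i<r. f (r - i))"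
proof -
  have "(\<Prod>j=1..r. f j) = (\<Prod>i<r. f (Suc i))"
    by (simp add: prod.atLeast1_atMost_eq)
  also have "\<dots> = (\<Prod>i<r. f (Suc (r - Suc i)))"
    by (rule prod.nat_diff_reindex[symmetric])
  also have "\<dots> = (\<Prod>i<r. f (r - i))"
    by (intro prod.cong) (auto simp: Suc_diff_Suc)
  finally show ?thesis .
qed

lemma prod_1_plus_powi_qS1:
  fixes q :: "'a::field"
  assumes "q \<noteq> 0" and "\<And>m. m \<le> r \<Longrightarrow> qfact q m \<noteq> 0"
  shows "(\<Prod>j=1..r. 1 + t * q powi (h - int j))
       = (\<Sum>m=0..r. 1 / qfact q m * (\<Sum>k=0..m. q powi ((h - int r) * int m)
            * qS1 q (int m - 1) k * (-1) ^ k * qint q r ^ (m - k)) * t ^ m)"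
proof -
  define s where "s = t * q powi (h - int r)"
  have "q powi (h - int (r - i)) = q powi (h - int r) * q ^ i" if "i < r" for i
  proof -
    have "h - int (r - i) = (h - int r) + int i" using that by simp
    hence "q powi (h - int (r - i)) = q powi ((h - int r) + int i)" by (simp only:)
    also have "\<dots> = q powi (h - int r) * q powi (int i)"
      by (rule power_int_add) (simp add: assms(1))
    finally show ?thesis by simp
  qed
  hence "(\<Prod>j=1..r. 1 + t * q powi (h - int j)) = (\<Prod>i<r. 1 + q ^ i * s)"
    unfolding prod_atLeast1_atMost_rev s_def by (intro prod.cong) (simp_all add: ac_simps)
  also have "\<dots> = (\<Sum>m\<le>r. qfalling q r m / qfact q m * s ^ m)"
    by (rule q_binomial[OF assms(2)])
  also have "\<dots> = (\<Sum>m=0..r. 1 / qfact q m * (\<Sum>k=0..m. q powi ((h - int r) * int m)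
            * qS1 q (int m - 1) k * (-1) ^ k * qint q r ^ (m - k)) * t ^ m)"
  proof (rule sum.cong)
    fix m assume "m \<in> {0..r}"
    hence "(\<Sum>k=0..m. q powi ((h - int r) * int m) * qS1 q (int m - 1) k * (-1) ^ k * qint q r ^ (m - k))
        = q powi ((h - int r) * int m) * qfalling q r m"
      using sum_qS1_eq_qfalling[of m r q] by (simp add: mult.assoc flip: sum_distrib_left)
    thus "qfalling q r m / qfact q m * s ^ m = 1 / qfact q m * (\<Sum>k=0..m. q powi ((h - int r) * int m)
            * qS1 q (int m - 1) k * (-1) ^ k * qint q r ^ (m - k)) * t ^ m"
      by (simp add: s_def power_mult_distrib power_int_power')
  qed auto
  finally show ?thesis .
qed

section \<open>Integrals of the q-Euler polynomials\<close>

lemma qint_add_power_expand: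
  fixes q :: "'a::field"
  shows "qint q (m + y) ^ n
       = (\<Sum>l\<le>n. (1 / (1 - q) ^ n * of_nat (n choose l) * (-1) ^ l * q ^ (m * l)) * (q ^ l) ^ y)"
proof -
  have "(1 - q ^ (m + y)) ^ n = (\<Sum>l\<le>n. of_nat (n choose l) * (- (q ^ (m + y))) ^ l)"
    using binomial_ring[of "- (q ^ (m + y))" 1 n] by simp
  also have "\<dots> = (\<Sum>l\<le>n. of_nat (n choose l) * (-1) ^ l * q ^ (m * l) * (q ^ l) ^ y)"
  proof (intro sum.cong refl)
    fix l
    have "(q ^ (m + y)) ^ l = q ^ (m * l) * (q ^ l) ^ y"
      by (simp add: algebra_simps power_add flip: power_mult)
    thus "of_nat (n choose l) * (- (q ^ (m + y))) ^ l = of_nat (n choose l) * (-1) ^ l * q ^ (m * l) * (q ^ l) ^ y"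
      by (simp only: power_minus[of "q ^ (m + y)"] mult.assoc)
  qed
  moreover have "qint q (m + y) ^ n = 1 / (1 - q) ^ n * (1 - q ^ (m + y)) ^ n"
    unfolding qint_def by (simp add: power_divide)
  ultimately show ?thesis
    by (simp only: sum_distrib_left mult.assoc)
qed

lemma qint_add_power_double_sum:
  fixes q :: "'a::field"
  assumes "q \<noteq> 1"
  shows "qint q (m + y) ^ n = 1 / (1 - q) ^ n * (\<Sum>j=0..n. \<Sum>l=0..j.
           of_nat (n choose j) * of_nat (j choose l) * (-1) ^ (j + l)
           * (1 - q) ^ l * q ^ (m * j) * qint q y ^ l)"
proof -
  have inner: "(\<Sum>l=0..j. of_nat (n choose j) * of_nat (j choose l) * (-1) ^ (j + l)
                 * (1 - q) ^ l * q ^ (m * j) * qint q y ^ l)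
             = of_nat (n choose j) * (- (q ^ (m + y))) ^ j" for j
  proof -
    have "(1 - q) ^ l * qint q y ^ l = (1 - q ^ y) ^ l" for l
      using assms unfolding qint_def by (simp add: power_divide)
    hence "(-1) ^ l * ((1 - q) ^ l * qint q y ^ l) = (q ^ y - 1) ^ l" for l
      by (simp flip: power_mult_distrib)
    hence "(\<Sum>l=0..j. of_nat (n choose j) * of_nat (j choose l) * (-1) ^ (j + l)
                 * (1 - q) ^ l * q ^ (m * j) * qint q y ^ l)
        = of_nat (n choose j) * (-1) ^ j * q ^ (m * j)
            * (\<Sum>l\<le>j. of_nat (j choose l) * (q ^ y - 1) ^ l * 1 ^ (j - l))"
      unfolding atLeast0AtMost sum_distrib_left
      by (intro sum.cong refl) (simp add: power_add ac_simps)
    also have "(\<Sum>l\<le>j. of_nat (j choose l) * (q ^ y - 1) ^ l * 1 ^ (j - l)) = (q ^ y) ^ j"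
      using binomial_ring[of "q ^ y - 1" 1 j] by (simp add: ac_simps)
    moreover have "(- (q ^ (m + y))) ^ j = (-1) ^ j * q ^ (m * j) * (q ^ y) ^ j"
      unfolding power_minus[of "q ^ (m + y)"]
      by (simp only: power_add power_mult_distrib power_mult mult.assoc)
    ultimately show ?thesis
      by (simp only: mult.assoc)
  qed
  have "(\<Sum>j=0..n. of_nat (n choose j) * (- (q ^ (m + y))) ^ j) = (1 - q ^ (m + y)) ^ n"
    using binomial_ring[of "- (q ^ (m + y))" 1 n] by (simp add: atLeast0AtMost ac_simps)
  thus ?thesis
    unfolding inner by (simp add: qint_def power_divide)
qed

lemma power_int_sum:
  fixes q :: "'a::field"
  assumes "q \<noteq> 0"
  shows "q powi (\<Sum>j\<in>A. f j) = (\<Prod>j\<in>A. q powi f j)"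
proof (induction A rule: infinite_finite_induct)
  case (insert a A)
  thus ?case using assms by (simp add: power_int_add)
qed simp_all

definition qEuler_weight :: "'a::field \<Rightarrow> nat \<Rightarrow> nat \<Rightarrow> 'a" where
  "qEuler_weight q n l = 1 / (1 - q) ^ n * of_nat (n choose l) * (-1) ^ l * (2 / (1 + q ^ l))"

context padic_field
begin

lemma mfint_qEuler_NH_denominator:
  assumes q: "near_one q"
  shows "mfint p av r (\<lambda>xs. q ^ (l * (\<Sum>j=1..r. xs j)) * q powi (\<Sum>j=1..r. (h - int j) * int (xs j)))
       = (\<Prod>j=1..r. 2 / (1 + q ^ l * q powi (h - int j)))"
proof -
  have q0: "q \<noteq> 0" using near_one_av[OF q] by auto
  define w where "w j = q ^ l * q powi (h - int j)" for j
  have "w j = q powi (int l + (h - int j))" for j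
    unfolding w_def using q0 by (simp add: power_int_add)
  hence w: "near_one (w j)" for j by (simp add: near_one_powi[OF q])
  have "q ^ (l * (\<Sum>j=1..r. xs j)) * q powi (\<Sum>j=1..r. (h - int j) * int (xs j))
      = 1 * (\<Prod>j=1..r. w j ^ xs j)" for xs
  proof -
    have "q powi (\<Sum>j=1..r. (h - int j) * int (xs j)) = (\<Prod>j=1..r. (q powi (h - int j)) ^ xs j)"
      using q0 by (simp add: power_int_sum power_int_mult)
    thus ?thesis
      unfolding w_def by (simp add: power_mult power_sum power_mult_distrib prod.distrib)
  qed
  thus ?thesis
    using mfint_geometric_prod[OF w, where k=r and G="\<lambda>_. 1"] by (simp add: w_def)
qed

lemma has_fint_qint_add_power:
  assumes q: "near_one q"
  shows "has_fint (\<lambda>y. qint q (m + y) ^ n) (\<Sum>l\<le>n. qEuler_weight q n l * (q ^ l) ^ m)"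
proof -
  have "has_fint (\<lambda>y. \<Sum>l\<le>n. (1 / (1 - q) ^ n * of_nat (n choose l) * (-1) ^ l * q ^ (m * l)) * (q ^ l) ^ y)
      (\<Sum>l\<le>n. (1 / (1 - q) ^ n * of_nat (n choose l) * (-1) ^ l * q ^ (m * l)) * (2 / (1 + q ^ l)))"
    by (rule has_fint_geometric_sum) (simp_all add: near_one_power[OF q])
  thus ?thesis
    by (simp add: qint_add_power_expand qEuler_weight_def power_mult[symmetric] ac_simps)
qed

lemma qEuler_poly_eq_sum_weight:
  "near_one q \<Longrightarrow> qEuler_poly p av q n m = (\<Sum>l\<le>n. qEuler_weight q n l * (q ^ l) ^ m)"
  unfolding qEuler_poly_def by (intro fint_eqI has_fint_qint_add_power)

lemma qEuler_poly_eq_sum_qEuler: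
  assumes q: "near_one q" and "q \<noteq> 1"
  shows "qEuler_poly p av q n m = 1 / (1 - q) ^ n * (\<Sum>j=0..n. \<Sum>l=0..j.
           of_nat (n choose j) * of_nat (j choose l) * (-1) ^ (j + l)
           * (1 - q) ^ l * q ^ (m * j) * qEuler p av q l)"
proof -
  have "has_fint (\<lambda>y. qint q y ^ l) (qEuler p av q l)" for l
    using has_fint_qint_add_power[OF q, of 0 l] fint_eqI unfolding qEuler_def by simp
  hence "has_fint (\<lambda>y. qint q (m + y) ^ n) (1 / (1 - q) ^ n * (\<Sum>j=0..n. \<Sum>l=0..j.
           of_nat (n choose j) * of_nat (j choose l) * (-1) ^ (j + l)
           * (1 - q) ^ l * q ^ (m * j) * qEuler p av q l))"
    unfolding qint_add_power_double_sum[OF \<open>q \<noteq> 1\<close>]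
    by (intro has_fint_cmult has_fint_sum finite_atLeastAtMost)
  thus ?thesis unfolding qEuler_poly_def by (rule fint_eqI)
qed

lemma fint_qEuler_NH:
  assumes q: "near_one q"
  shows "fint p av (qEuler_NH p av q n h r)
       = 1 / 2 ^ r * (\<Sum>l\<le>n. qEuler_weight q n l * (\<Prod>j=1..r. 1 + q ^ l * q powi (h - int j)))"
proof -
  define c where "c l = 1 / (1 - q) ^ n * of_nat (n choose l) * (-1) ^ l
      * ((\<Prod>j=1..r. 1 + q ^ l * q powi (h - int j)) / 2 ^ r)" for l
  have NH: "qEuler_NH p av q n h r = (\<lambda>x. \<Sum>l\<le>n. c l * (q ^ l) ^ x)"
  proof
    fix x
    have "a / (\<Prod>j=1..r. 2 / (1 + q ^ l * q powi (h - int j)))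
        = a * ((\<Prod>j=1..r. 1 + q ^ l * q powi (h - int j)) / 2 ^ r)" for a l
      by (simp add: prod_dividef)
    hence "qEuler_NH p av q n h r x = 1 / (1 - q) ^ n * (\<Sum>l=0..n. of_nat (n choose l) * (-1) ^ l
        * q ^ (l * x) * ((\<Prod>j=1..r. 1 + q ^ l * q powi (h - int j)) / 2 ^ r))"
      unfolding qEuler_NH_def by (simp only: mfint_qEuler_NH_denominator[OF q])
    thus "qEuler_NH p av q n h r x = (\<Sum>l\<le>n. c l * (q ^ l) ^ x)"
      unfolding c_def atLeast0AtMost sum_distrib_left
      by (simp add: power_mult ac_simps)
  qed
  have "has_fint (qEuler_NH p av q n h r) (\<Sum>l\<le>n. c l * (2 / (1 + q ^ l)))"
    unfolding NH by (rule has_fint_geometric_sum) (simp_all add: near_one_power[OF q])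
  thus ?thesis
    by (subst fint_eqI) (simp_all add: c_def qEuler_weight_def sum_distrib_left ac_simps)
qed

lemma fint_qEuler_NH_eq_qS1_sum:
  assumes q: "near_one q" and "q \<noteq> 1"
  shows "fint p av (qEuler_NH p av q n h r)
      = 1 / 2 ^ r * (\<Sum>m=0..r. 1 / qfact q m *
          (\<Sum>k=0..m. q powi ((h - int r) * int m) * qS1 q (int m - 1) k * (-1) ^ k
             * qint q r ^ (m - k) * qEuler_poly p av q n m))"
proof -
  define c where "c m = 1 / qfact q m * (\<Sum>k=0..m. q powi ((h - int r) * int m)
      * qS1 q (int m - 1) k * (-1) ^ k * qint q r ^ (m - k))" for m
  have "q \<noteq> 0" using near_one_av[OF q] by auto
  hence prod: "(\<Prod>j=1..r. 1 + q ^ l * q powi (h - int j)) = (\<Sum>m=0..r. c m * (q ^ l) ^ m)" for l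
    unfolding c_def using prod_1_plus_powi_qS1 qfact_ne_0[OF q \<open>q \<noteq> 1\<close>] by blast
  have "(\<Sum>m=0..r. 1 / qfact q m * (\<Sum>k=0..m. q powi ((h - int r) * int m) * qS1 q (int m - 1) k
          * (-1) ^ k * qint q r ^ (m - k) * qEuler_poly p av q n m))
      = (\<Sum>m=0..r. c m * qEuler_poly p av q n m)"
    unfolding c_def by (simp add: sum_distrib_right mult.assoc)
  also have "\<dots> = (\<Sum>m=0..r. \<Sum>l\<le>n. qEuler_weight q n l * (c m * (q ^ l) ^ m))"
    by (simp add: qEuler_poly_eq_sum_weight[OF q] sum_distrib_left ac_simps)
  also have "\<dots> = (\<Sum>l\<le>n. \<Sum>m=0..r. qEuler_weight q n l * (c m * (q ^ l) ^ m))"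
    by (rule sum.swap)
  also have "\<dots> = (\<Sum>l\<le>n. qEuler_weight q n l * (\<Prod>j=1..r. 1 + q ^ l * q powi (h - int j)))"
    unfolding prod sum_distrib_left ..
  finally show ?thesis
    by (simp add: fint_qEuler_NH[OF q])
qed

end

theorem mainTheorem12:
  fixes p :: nat and av :: "'a::field \<Rightarrow> real" and q :: 'a
    and h :: int and n :: nat and r :: nat
  assumes "prime p" and "odd p"
    and "Cp_field p av"
    and "q \<noteq> 1"
    and "av (1 - q) < real p powr (- 1 / (real p - 1))"
  shows "fint p av (qEuler_NH p av q n h r)
           = 1 / 2 ^ r * (\<Sum>m=0..r. 1 / qfact q m *
               (\<Sum>k=0..m. q powi ((h - int r) * int m) * qS1 q (int m - 1) k * (-1) ^ k
                  * qint q r ^ (m - k) * qEuler_poly p av q n m))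
       \<and> 1 / 2 ^ r * (\<Sum>m=0..r. 1 / qfact q m *
               (\<Sum>k=0..m. q powi ((h - int r) * int m) * qS1 q (int m - 1) k * (-1) ^ k
                  * qint q r ^ (m - k) * qEuler_poly p av q n m))
           = 1 / 2 ^ r * (\<Sum>m=0..r. 1 / qfact q m *
               (\<Sum>k=0..m. q powi ((h - int r) * int m) * qS1 q (int m - 1) k * (-1) ^ k
                  * qint q r ^ (m - k) *
                  (1 / (1 - q) ^ n * (\<Sum>j=0..n. \<Sum>l=0..j.
                     of_nat (n choose j) * of_nat (j choose l) * (-1) ^ (j + l)
                     * (1 - q) ^ l * q ^ (m * j) * qEuler p av q l))))"
proof -
  interpret padic_field p av
    using assms(1-3) by unfold_locales
  have q: "near_one q"
    using assms(5) unfolding near_one_def crit_radius_def by (simp add: av_minus_commute)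
  show ?thesis
    unfolding fint_qEuler_NH_eq_qS1_sum[OF q assms(4)]
    by (simp only: qEuler_poly_eq_sum_qEuler[OF q assms(4)])
qed

end
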